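(* (i) The following monomials of $P_5$ are strictly inadmissible: $x_1x_2^{6}x_3^{3}x_4^{6}x_5^{5}$, $x_1x_2^{6}x_3^{6}x_4^{3}x_5^{5}$, $x_1^{3}x_2^{5}x_3^{5}x_4^{2}x_5^{6}$, $x_1^{3}x_2^{5}x_3^{5}x_4^{6}x_5^{2}$, $x_1^{3}x_2^{5}x_3^{6}x_4^{5}x_5^{2}$, $x_1^{3}x_2^{4}x_3^{5}x_4^{3}x_5^{6}$, $x_1^{3}x_2^{4}x_3^{5}x_4^{6}x_5^{3}$, $x_1^{3}x_2^{5}x_3^{4}x_4^{3}x_5^{6}$, $x_1^{3}x_2^{5}x_3^{4}x_4^{6}x_5^{3}$, $x_1^{3}x_2^{5}x_3^{6}x_4^{4}x_5^{3}$. (ii) The following monomials of $P_5$ are strongly inadmissible: $x_1x_2^{3}x_3^{6}x_4^{6}x_5^{5}$, $x_1^{3}x_2x_3^{6}x_4^{6}x_5^{5}$, $x_1^{3}x_2^{5}x_3^{6}x_4^{6}x_5$, $x_1^{3}x_2^{5}x_3^{2}x_4^{6}x_5^{5}$, $x_1^{3}x_2^{5}x_3^{6}x_4^{2}x_5^{5}$.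
   Context: $P_5=\mathbb F_2[x_1,\dots,x_5]$, $\deg x_i=1$, a module over the mod-2 Steenrod algebra $\mathcal A$. $\mathcal A(s-1)$ is the sub-Hopf algebra generated by $Sq^r$, $0\le r<2^s$, with augmentation ideal $\mathcal A(s-1)^+$. For $x=x_1^{a_1}\cdots x_5^{a_5}$: weight vector $\omega_i(x)=\sum_j\alpha_{i-1}(a_j)$ ($\alpha_r(a)$ the $r$-th binary digit), exponent vector $\sigma(x)=(a_1,\dots,a_5)$, both ordered left-lexicographically; for monomials of equal degree, $x<y$ iff $\omega(x)<\omega(y)$, or $\omega(x)=\omega(y)$ and $\sigma(x)<\sigma(y)$. $P_5^-(\omega)$ is spanned by monomials $y$ of degree $\sum_i2^{i-1}\omega_i$ with $\omega(y)<\omega$. Minimal spike of degree $n$: if $\mu(n)=s\le5$, where $\mu(n)$ is the least $r$ with $n=\sum_{i=1}^r(2^{u_i}-1)$, $u_i>0$, write uniquely $n=\sum_{i=1}^s(2^{e_i}-1)$, $e_1>\dots>e_{s-1}\ge e_s>0$; the minimal spike is $z=\prod_{i=1}^sx_i^{2^{e_i}-1}$. $\mathcal P_{(5,n)}$ is spanned by monomials $x$ of degree $n$ with $\sum_{j=1}^h2^{j-1}\omega_j(x)<\sum_{j=1}^h2^{j-1}\omega_j(z)$ for some $h\ge1$. With $s=\max\{i:\omega_i(x)>0\}$: a monomial $x$ is strictly inadmissible if there are monomials $y_1,\dots,y_r<x$ with $x+\sum_jy_j\in\mathcal A(s-1)^+P_5+P_5^-(\omega(x))$; a monomial $x$ of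 degree $n$ is strongly inadmissible if there are monomials $y_1,\dots,y_t$ with $\omega(y_u)=\omega(x)$, $y_u<x$, and $x+\sum_uy_u\in\mathcal A(s-1)^+P_5+P_5^-(\omega(x))+\mathcal P_{(5,n)}$. *)

theory Defs
  imports Main
begin

text \<open>Monomials of P_5 = F_2[x_1,...,x_5] are exponent vectors (lists of length 5);
  x_1^{a_1}...x_5^{a_5} is [a_1,...,a_5].  A polynomial over F_2 is the finite set of
  monomials having coefficient 1; addition is symmetric difference.\<close>

type_synonym mono = "nat list"
type_synonym poly = "mono set"

definition mons :: "mono set" where
  "mons = {a. length a = 5}"

definition is_poly :: "poly \<Rightarrow> bool" where
  "is_poly f \<longleftrightarrow> finite f \<and> f \<subseteq> mons"

definition padd :: "poly \<Rightarrow> poly \<Rightarrow> poly" where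
  "padd f g = (f - g) \<union> (g - f)"

definition deg :: "mono \<Rightarrow> nat" where
  "deg a = sum_list a"

text \<open>Sq^k on a monomial (Cartan formula): the coefficient of x^b in Sq^k(x^a) is
  prod_i binom(a_i, b_i - a_i) mod 2, for b \<ge> a componentwise with deg b = deg a + k.\<close>
definition Sq_mono :: "nat \<Rightarrow> mono \<Rightarrow> poly" where
  "Sq_mono k a = {b. length b = 5 \<and> (\<forall>i<5. a ! i \<le> b ! i) \<and> deg b = deg a + k \<and>
      odd (\<Prod>i<5. (a ! i) choose (b ! i - a ! i))}"

definition Sq :: "nat \<Rightarrow> poly \<Rightarrow> poly" where
  "Sq k f = {b. odd (card {a \<in> f. b \<in> Sq_mono k a})}"

text \<open>A(s-1)^+ P_5: the F_2-span of all w f with w a nonempty product of generators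
  Sq^r, 0 < r < 2^s, and f \<in> P_5.  Since Sq^{r_1}...Sq^{r_k} f = Sq^{r_1}(g), this is
  the span of Sq^r f, 0 < r < 2^s.\<close>
inductive_set Aplus_hit :: "nat \<Rightarrow> poly set" for s :: nat where
  zero: "{} \<in> Aplus_hit s"
| gen: "0 < r \<Longrightarrow> r < 2 ^ s \<Longrightarrow> is_poly f \<Longrightarrow> Sq r f \<in> Aplus_hit s"
| add: "f \<in> Aplus_hit s \<Longrightarrow> g \<in> Aplus_hit s \<Longrightarrow> padd f g \<in> Aplus_hit s"

definition omega :: "mono \<Rightarrow> nat \<Rightarrow> nat" where
  "omega x i = (\<Sum>j<5. (x ! j div 2 ^ (i - 1)) mod 2)"

definition omega_eq :: "mono \<Rightarrow> mono \<Rightarrow> bool" where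
  "omega_eq x y \<longleftrightarrow> (\<forall>i\<ge>1. omega x i = omega y i)"

definition omega_less :: "mono \<Rightarrow> mono \<Rightarrow> bool" where
  "omega_less x y \<longleftrightarrow> (\<exists>i\<ge>1. omega x i < omega y i \<and> (\<forall>j. 1 \<le> j \<and> j < i \<longrightarrow> omega x j = omega y j))"

definition sigma_less :: "mono \<Rightarrow> mono \<Rightarrow> bool" where
  "sigma_less x y \<longleftrightarrow> (\<exists>i<5. x ! i < y ! i \<and> (\<forall>j<i. x ! j = y ! j))"

definition mono_less :: "mono \<Rightarrow> mono \<Rightarrow> bool" where
  "mono_less x y \<longleftrightarrow> deg x = deg y \<and> (omega_less x y \<or> (omega_eq x y \<and> sigma_less x y))"

text \<open>Monomials spanning P_5^-(omega(x)): degree = sum 2^{i-1} omega_i(x) (= deg x),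
  weight vector < omega(x).\<close>
definition Pminus_mons :: "mono \<Rightarrow> mono set" where
  "Pminus_mons x = {y \<in> mons. deg y = deg x \<and> omega_less y x}"

definition mu :: "nat \<Rightarrow> nat" where
  "mu n = (LEAST r. \<exists>u. length u = r \<and> (\<forall>v\<in>set u. 0 < v) \<and> n = sum_list (map (\<lambda>v. 2 ^ v - 1) u))"

definition min_spike :: "nat \<Rightarrow> mono" where
  "min_spike n = (THE z. \<exists>e. length e = mu n \<and>
      (\<forall>i. i + 2 < length e \<longrightarrow> e ! (i + 1) < e ! i) \<and>
      (\<forall>i. i + 1 < length e \<longrightarrow> e ! (i + 1) \<le> e ! i) \<and>
      (\<forall>v\<in>set e. 0 < v) \<and>
      n = sum_list (map (\<lambda>v. 2 ^ v - 1) e) \<and>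
      z = map (\<lambda>j. if j < length e then 2 ^ (e ! j) - 1 else 0) [0..<5])"

definition Pspike_mons :: "nat \<Rightarrow> mono set" where
  "Pspike_mons n = {x \<in> mons. mu n \<le> 5 \<and> deg x = n \<and>
      (\<exists>h\<ge>1. (\<Sum>j=1..h. 2 ^ (j - 1) * omega x j) < (\<Sum>j=1..h. 2 ^ (j - 1) * omega (min_spike n) j))}"

definition smax :: "mono \<Rightarrow> nat" where
  "smax x = (GREATEST i. 0 < omega x i)"

definition strictly_inadmissible :: "mono \<Rightarrow> bool" where
  "strictly_inadmissible x \<longleftrightarrow> x \<in> mons \<and>
     (\<exists>Y. finite Y \<and> Y \<subseteq> mons \<and> (\<forall>y\<in>Y. mono_less y x) \<and>
        (\<exists>h m. h \<in> Aplus_hit (smax x) \<and> finite m \<and> m \<subseteq> Pminus_mons x \<and>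
               insert x Y = padd h m))"

definition strongly_inadmissible :: "mono \<Rightarrow> bool" where
  "strongly_inadmissible x \<longleftrightarrow> x \<in> mons \<and>
     (\<exists>Y. finite Y \<and> Y \<subseteq> mons \<and> (\<forall>y\<in>Y. omega_eq y x \<and> mono_less y x) \<and>
        (\<exists>h m p. h \<in> Aplus_hit (smax x) \<and> finite m \<and> m \<subseteq> Pminus_mons x \<and>
               finite p \<and> p \<subseteq> Pspike_mons (deg x) \<and>
               insert x Y = padd (padd h m) p))"

end

theory Submission
  imports Defs
begin

text \<open>For each listed monomial x an explicit sum h of squares Sq^1(x^m) and Sq^2(x^m) lies
  in A(s-1)^+ P_5 and contains x, and every other monomial of h either has smaller weight
  (so lies in P_5^-(omega(x))), or has the same weight and a smaller exponent vector, or, in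
  part (ii), lies in P_(5,21), i.e. is below the minimal spike x_1^15 x_2^3 x_3^3. Cartan's
  formula and the two orders involve only finitely many exponents and weights, so all of this
  is decided by evaluating finitely many sums.\<close>

section \<open>Evaluating Steenrod squares on monomials\<close>

fun compositions :: "nat \<Rightarrow> nat \<Rightarrow> nat list list" where
  "compositions 0 k = (if k = 0 then [[]] else [])"
| "compositions (Suc n) k = concat (map (\<lambda>i. map (Cons i) (compositions n (k - i))) [0..<Suc k])"

lemma set_compositions: "set (compositions n k) = {d. length d = n \<and> sum_list d = k}"
proof (induction n arbitrary: k)
  case 0
  then show ?case by auto
next
  case (Suc n)
  show ?case
  proof (intro set_eqI iffI)
    fix d assume "d \<in> set (compositions (Suc n) k)"
    then show "d \<in> {d. length d = Suc n \<and> sum_list d = k}" using Suc by auto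
  next
    fix d assume "d \<in> {d. length d = Suc n \<and> sum_list d = k}"
    then obtain i d' where "d = i # d'" "length d' = n" "i + sum_list d' = k"
      by (cases d) auto
    then show "d \<in> set (compositions (Suc n) k)" using Suc by force
  qed
qed

lemma length_5_cases:
  assumes "length a = 5"
  obtains a0 a1 a2 a3 a4 where "a = [a0, a1, a2, a3, a4]"
  using assms by (auto simp: numeral_eq_Suc length_Suc_conv)

lemma upt_5: "[0..<5] = [0, 1, 2, 3, 4::nat]"
  by (simp add: upt_rec)

lemma all_less_5: "(\<forall>i<5. P i) \<longleftrightarrow> P 0 \<and> P 1 \<and> P 2 \<and> P 3 \<and> P (4::nat)"
  by (auto simp: numeral_eq_Suc less_Suc_eq)

lemma prod_lessThan_5: "(\<Prod>i<5. f i) = f 0 * f 1 * f 2 * f 3 * (f (4::nat) :: 'a::comm_monoid_mult)"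
  by (simp add: numeral_eq_Suc lessThan_Suc mult_ac)

definition Sq_mono_list :: "nat \<Rightarrow> mono \<Rightarrow> mono list" where
  "Sq_mono_list k a = filter (\<lambda>b. odd (prod_list (map (\<lambda>i. (a ! i) choose (b ! i - a ! i)) [0..<5])))
      (map (map2 (+) a) (compositions 5 k))"

lemma set_Sq_mono_list:
  assumes "length a = 5"
  shows "set (Sq_mono_list k a) = Sq_mono k a"
proof -
  obtain a0 a1 a2 a3 a4 where a: "a = [a0, a1, a2, a3, a4]"
    using assms by (rule length_5_cases)
  show ?thesis
  proof (intro set_eqI iffI)
    fix b assume "b \<in> set (Sq_mono_list k a)"
    then obtain d where d: "d \<in> set (compositions 5 k)" "b = map2 (+) a d"
      "odd (prod_list (map (\<lambda>i. (a ! i) choose (b ! i - a ! i)) [0..<5]))"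
      unfolding Sq_mono_list_def by auto
    have "length d = 5" "sum_list d = k"
      using d(1) unfolding set_compositions by auto
    then obtain d0 d1 d2 d3 d4 where "d = [d0, d1, d2, d3, d4]" "d0 + d1 + d2 + d3 + d4 = k"
      by (auto elim: length_5_cases)
    with d show "b \<in> Sq_mono k a"
      unfolding Sq_mono_def a by (simp add: all_less_5 prod_lessThan_5 upt_5 deg_def mult_ac)
  next
    fix b assume b: "b \<in> Sq_mono k a"
    then obtain b0 b1 b2 b3 b4 where b': "b = [b0, b1, b2, b3, b4]"
      unfolding Sq_mono_def by (auto elim: length_5_cases)
    define d where "d = [b0 - a0, b1 - a1, b2 - a2, b3 - a3, b4 - a4]"
    have "d \<in> set (compositions 5 k)" "b = map2 (+) a d"
      using b unfolding set_compositions Sq_mono_def b' a d_def by (auto simp: all_less_5 deg_def)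
    moreover have "odd (prod_list (map (\<lambda>i. (a ! i) choose (b ! i - a ! i)) [0..<5]))"
      using b unfolding Sq_mono_def by (simp add: prod_lessThan_5 upt_5 mult_ac)
    ultimately show "b \<in> set (Sq_mono_list k a)"
      unfolding Sq_mono_list_def by auto
  qed
qed

lemma Sq_singleton: "Sq k {a} = Sq_mono k a"
proof (intro set_eqI)
  fix b
  have "{c \<in> {a}. b \<in> Sq_mono k c} = (if b \<in> Sq_mono k a then {a} else {})" by auto
  then show "b \<in> Sq k {a} \<longleftrightarrow> b \<in> Sq_mono k a" unfolding Sq_def by auto
qed

definition list_padd :: "mono list \<Rightarrow> mono list \<Rightarrow> mono list" where
  "list_padd xs ys = filter (\<lambda>a. a \<notin> set ys) xs @ filter (\<lambda>a. a \<notin> set xs) ys"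

lemma set_list_padd: "set (list_padd xs ys) = padd (set xs) (set ys)"
  by (auto simp: list_padd_def padd_def)

fun hit_sum :: "(nat \<times> mono) list \<Rightarrow> mono list" where
  "hit_sum [] = []"
| "hit_sum ((r, m) # cs) = list_padd (Sq_mono_list r m) (hit_sum cs)"

lemma hit_sum_in_Aplus_hit:
  assumes "list_all (\<lambda>(r, m). 0 < r \<and> r < 2 ^ s \<and> length m = 5) cs"
  shows "set (hit_sum cs) \<in> Aplus_hit s"
  using assms
proof (induction cs)
  case Nil
  then show ?case by (simp add: Aplus_hit.zero)
next
  case (Cons c cs)
  obtain r m where c: "c = (r, m)" by (cases c)
  with Cons.prems have r: "0 < r" "r < 2 ^ s" and m: "length m = 5" by auto
  have "is_poly {m}" using m by (simp add: is_poly_def mons_def)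
  then have "Sq r {m} \<in> Aplus_hit s" by (rule Aplus_hit.gen[OF r])
  then have "set (Sq_mono_list r m) \<in> Aplus_hit s"
    by (simp add: set_Sq_mono_list[OF m] Sq_singleton)
  with Cons c show ?case by (simp add: set_list_padd Aplus_hit.add)
qed

lemma Aplus_hit_mono:
  assumes "s \<le> t"
  shows "Aplus_hit s \<subseteq> Aplus_hit t"
proof
  fix f assume "f \<in> Aplus_hit s"
  then show "f \<in> Aplus_hit t"
  proof (induction rule: Aplus_hit.induct)
    case (gen r f)
    have "r < 2 ^ t"
      using gen.hyps(2) power_increasing[OF assms, of "2::nat"] by linarith
    with gen.hyps(1,3) show ?case by (intro Aplus_hit.gen)
  qed (auto intro: Aplus_hit.intros)
qed

lemma omega_code [code]: "omega x i = sum_list (map (\<lambda>j. x ! j div 2 ^ (i - 1) mod 2) [0..<5])"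
  unfolding omega_def by (simp add: atLeast0LessThan[symmetric] sum_set_upt_conv_sum_list_nat[symmetric])

lemma sigma_less_code [code]:
  "sigma_less y x \<longleftrightarrow> list_ex (\<lambda>i. y ! i < x ! i \<and> list_all (\<lambda>j. y ! j = x ! j) [0..<i]) [0..<5]"
  unfolding sigma_less_def by (auto simp: list_ex_iff list_all_iff)

lemma omega_less_irrefl: "\<not> omega_less x x"
  unfolding omega_less_def by auto

lemma omega_eq_0_above_deg:
  assumes "length x = 5" "deg x < 2 ^ N" "N < i"
  shows "omega x i = 0"
proof -
  have "(2::nat) ^ N \<le> 2 ^ (i - 1)" using assms(3) by (intro power_increasing) auto
  moreover have "x ! j \<le> deg x" if "j < 5" for j
    using elem_le_sum_list[of j x] that assms(1) by (simp add: deg_def)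
  ultimately have "x ! j div 2 ^ (i - 1) = 0" if "j < 5" for j
    using that assms(2) by (meson div_less le_less_trans less_le_trans)
  then show ?thesis unfolding omega_def by simp
qed

lemma le_smax:
  assumes "length x = 5" "deg x < 2 ^ N" "0 < omega x k"
  shows "k \<le> smax x"
proof -
  have "i \<le> N" if "0 < omega x i" for i
    using omega_eq_0_above_deg[OF assms(1,2)] that by (metis less_irrefl not_le)
  then show ?thesis
    unfolding smax_def using Greatest_le_nat[of "\<lambda>i. 0 < omega x i" k N] assms(3) by blast
qed

fun omega_less_from :: "mono \<Rightarrow> mono \<Rightarrow> nat \<Rightarrow> nat \<Rightarrow> bool" where
  "omega_less_from y x i 0 = False"
| "omega_less_from y x i (Suc n) =
     (omega y i < omega x i \<or> (omega y i = omega x i \<and> omega_less_from y x (Suc i) n))"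

lemma omega_less_from_imp:
  "omega_less_from y x i n \<Longrightarrow>
     \<exists>k\<ge>i. omega y k < omega x k \<and> (\<forall>j. i \<le> j \<and> j < k \<longrightarrow> omega y j = omega x j)"
proof (induction n arbitrary: i)
  case 0
  then show ?case by simp
next
  case (Suc n)
  show ?case
  proof (cases "omega y i < omega x i")
    case True
    then show ?thesis by auto
  next
    case False
    with Suc.prems have eq: "omega y i = omega x i" and "omega_less_from y x (Suc i) n" by auto
    then obtain k where k: "k \<ge> Suc i" "omega y k < omega x k"
      "\<forall>j. Suc i \<le> j \<and> j < k \<longrightarrow> omega y j = omega x j"
      using Suc.IH by blast
    have "\<forall>j. i \<le> j \<and> j < k \<longrightarrow> omega y j = omega x j"
      using k(3) eq by (metis Suc_leI le_neq_implies_less)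
    with k show ?thesis by (intro exI[of _ k]) auto
  qed
qed

definition mono_less_upto :: "nat \<Rightarrow> mono \<Rightarrow> mono \<Rightarrow> bool" where
  "mono_less_upto N y x \<longleftrightarrow>
     omega_less_from y x 1 N \<or>
     (list_all (\<lambda>i. omega y i = omega x i) [1..<Suc N] \<and> sigma_less y x)"

lemma mono_less_upto_imp_mono_less:
  assumes "length y = 5" "length x = 5" "deg y = deg x" "deg x < 2 ^ N" "mono_less_upto N y x"
  shows "mono_less y x"
proof -
  have "omega_eq y x" if "list_all (\<lambda>i. omega y i = omega x i) [1..<Suc N]"
    unfolding omega_eq_def
  proof (intro allI impI)
    fix i :: nat assume "1 \<le> i"
    show "omega y i = omega x i"
    proof (cases "i \<le> N")
      case True
      with \<open>1 \<le> i\<close> that show ?thesis by (auto simp: list_all_iff)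
    next
      case False
      with assms(1-4) show ?thesis by (simp add: omega_eq_0_above_deg)
    qed
  qed
  moreover have "omega_less y x" if "omega_less_from y x 1 N"
    using omega_less_from_imp[OF that] unfolding omega_less_def by blast
  ultimately show ?thesis
    using assms(3,5) unfolding mono_less_upto_def mono_less_def by blast
qed

lemma hit_sum_in_Aplus_hit_smax:
  assumes "length x = 5" "deg x < 2 ^ N" "0 < omega x s"
    and "list_all (\<lambda>(r, m). 0 < r \<and> r < 2 ^ s \<and> length m = 5) cs"
  shows "set (hit_sum cs) \<in> Aplus_hit (smax x)"
  using hit_sum_in_Aplus_hit[OF assms(4)] Aplus_hit_mono[OF le_smax[OF assms(1-3)]] by blast

lemma strictly_inadmissible_if_hit_sum:
  assumes x: "length x = 5" "deg x < 2 ^ N" "0 < omega x s"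
    and cs: "list_all (\<lambda>(r, m). 0 < r \<and> r < 2 ^ s \<and> length m = 5) cs"
    and x_in: "x \<in> set (hit_sum cs)"
    and below: "\<forall>y\<in>set (hit_sum cs). y \<noteq> x \<longrightarrow> length y = 5 \<and> deg y = deg x \<and> mono_less_upto N y x"
  shows "strictly_inadmissible x"
proof -
  define h where "h = set (hit_sum cs)"
  define m where "m = {y \<in> h. omega_less y x}"
  define Y where "Y = h - m - {x}"
  have less: "length y = 5 \<and> mono_less y x" if "y \<in> h" "y \<noteq> x" for y
    using below that x(1,2) mono_less_upto_imp_mono_less unfolding h_def by blast
  have "h \<in> Aplus_hit (smax x)"
    unfolding h_def using hit_sum_in_Aplus_hit_smax[OF x cs] .
  moreover have "finite m" "m \<subseteq> Pminus_mons x"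
    using less omega_less_irrefl unfolding m_def h_def Pminus_mons_def mons_def mono_less_def
    by auto
  moreover have "insert x Y = padd h m"
    using x_in omega_less_irrefl unfolding Y_def padd_def m_def h_def by auto
  moreover have "finite Y" "Y \<subseteq> mons" "\<forall>y\<in>Y. mono_less y x"
    using less unfolding Y_def h_def mons_def by auto
  ultimately show ?thesis
    using x(1) unfolding strictly_inadmissible_def mons_def by blast
qed

section \<open>The minimal spike of degree 21\<close>

lemma two_power_ge_32: "5 \<le> v \<Longrightarrow> (32::nat) \<le> 2 ^ v"
  using power_increasing[of 5 v "2::nat"] by simp

lemma mu_21: "mu 21 = 3"
  unfolding mu_def
proof (rule Least_equality)
  show "\<exists>u. length u = 3 \<and> (\<forall>v\<in>set u. 0 < v) \<and> 21 = sum_list (map (\<lambda>v. (2::nat) ^ v - 1) u)"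
    by (rule exI[of _ "[4, 2, 2]"]) simp
next
  fix r assume "\<exists>u. length u = r \<and> (\<forall>v\<in>set u. 0 < v) \<and> 21 = sum_list (map (\<lambda>v. (2::nat) ^ v - 1) u)"
  then obtain u where u: "length u = r" "\<forall>v\<in>set u. 0 < v" "21 = sum_list (map (\<lambda>v. (2::nat) ^ v - 1) u)"
    by blast
  show "3 \<le> r"
  proof (rule ccontr)
    assume "\<not> 3 \<le> r"
    then consider "r = 0" | "r = 1" | "r = 2" by linarith
    then show False
    proof cases
      case 1
      with u show False by simp
    next
      case 2
      then obtain v where "u = [v]" using u(1) by (auto simp: length_Suc_conv)
      then have v: "2 ^ v = (22::nat)" using u(3) by simp
      with two_power_ge_32[of v] have "v < 5" by linarith
      with v show False by (auto simp: less_Suc_eq numeral_eq_Suc)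
    next
      case 3
      then obtain a b where ab: "u = [a, b]" using u(1) by (auto simp: numeral_eq_Suc length_Suc_conv)
      then have "even ((2::nat) ^ a + 2 ^ b)" using u(2) by simp
      moreover have "(2::nat) ^ a + 2 ^ b = 23"
        using u(3) ab one_le_power[of "2::nat" a] one_le_power[of "2::nat" b] by simp
      ultimately show False by simp
    qed
  qed
qed

lemma min_spike_21: "min_spike 21 = [15, 3, 3, 0, 0]"
  unfolding min_spike_def mu_21
proof (rule the_equality)
  show "\<exists>e. length e = 3 \<and> (\<forall>i. i + 2 < length e \<longrightarrow> e ! (i + 1) < e ! i) \<and>
        (\<forall>i. i + 1 < length e \<longrightarrow> e ! (i + 1) \<le> e ! i) \<and> (\<forall>v\<in>set e. 0 < v) \<and>
        21 = sum_list (map (\<lambda>v. (2::nat) ^ v - 1) e) \<and>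
        [15, 3, 3, 0, 0] = map (\<lambda>j. if j < length e then (2::nat) ^ (e ! j) - 1 else 0) [0..<5]"
    by (rule exI[of _ "[4, 2, 2]"]) (auto simp: upt_5 less_Suc_eq numeral_eq_Suc)
next
  fix z assume "\<exists>e. length e = 3 \<and> (\<forall>i. i + 2 < length e \<longrightarrow> e ! (i + 1) < e ! i) \<and>
        (\<forall>i. i + 1 < length e \<longrightarrow> e ! (i + 1) \<le> e ! i) \<and> (\<forall>v\<in>set e. 0 < v) \<and>
        21 = sum_list (map (\<lambda>v. (2::nat) ^ v - 1) e) \<and>
        z = map (\<lambda>j. if j < length e then (2::nat) ^ (e ! j) - 1 else 0) [0..<5]"
  then obtain e where e: "length e = 3" "\<forall>i. i + 2 < length e \<longrightarrow> e ! (i + 1) < e ! i"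
    "\<forall>i. i + 1 < length e \<longrightarrow> e ! (i + 1) \<le> e ! i" "\<forall>v\<in>set e. 0 < v"
    "21 = sum_list (map (\<lambda>v. (2::nat) ^ v - 1) e)"
    "z = map (\<lambda>j. if j < length e then (2::nat) ^ (e ! j) - 1 else 0) [0..<5]"
    by blast
  obtain a b c where abc: "e = [a, b, c]"
    using e(1) by (auto simp: numeral_eq_Suc length_Suc_conv)
  have order: "b < a" "c \<le> b" "0 < c"
    using e(2)[rule_format, of 0] e(3)[rule_format, of 1] e(4) abc by auto
  have "21 = (2 ^ a - 1) + ((2 ^ b - 1) + (2 ^ c - (1::nat)))"
    using e(5) abc by simp
  then have sum: "2 ^ a + 2 ^ b + 2 ^ c = (24::nat)"
    using one_le_power[of "2::nat" a] one_le_power[of "2::nat" b] one_le_power[of "2::nat" c]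
    by linarith
  with two_power_ge_32[of a] have "a < 5" by linarith
  with order have "b < 5" "c < 5" by auto
  with \<open>a < 5\<close> order sum have "a = 4 \<and> b = 2 \<and> c = 2"
    by (auto simp: less_Suc_eq numeral_eq_Suc)
  then show "z = [15, 3, 3, 0, 0]" using e(6) abc by (simp add: upt_5)
qed

definition below_spike_upto :: "nat \<Rightarrow> mono \<Rightarrow> mono \<Rightarrow> bool" where
  "below_spike_upto N y z \<longleftrightarrow> list_ex (\<lambda>h.
     sum_list (map (\<lambda>j. 2 ^ (j - 1) * omega y j) [1..<Suc h]) <
     sum_list (map (\<lambda>j. 2 ^ (j - 1) * omega z j) [1..<Suc h])) [1..<Suc N]"

lemma sum_list_map_upt_Suc: "sum_list (map f [1..<Suc h]) = (\<Sum>j = 1..h. f j :: nat)"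
  by (simp only: sum_set_upt_conv_sum_list_nat[symmetric] set_upt atLeastLessThanSuc_atLeastAtMost)

lemma in_Pspike_mons_if_below_spike_upto:
  assumes "length y = 5" "deg y = n" "mu n \<le> 5" "below_spike_upto N y (min_spike n)"
  shows "y \<in> Pspike_mons n"
proof -
  obtain h where "1 \<le> h"
    "sum_list (map (\<lambda>j. 2 ^ (j - 1) * omega y j) [1..<Suc h]) <
     sum_list (map (\<lambda>j. 2 ^ (j - 1) * omega (min_spike n) j) [1..<Suc h])"
    using assms(4) unfolding below_spike_upto_def list_ex_iff by auto
  then show ?thesis
    using assms(1-3) unfolding Pspike_mons_def mons_def sum_list_map_upt_Suc by auto
qed

lemma strongly_inadmissible_if_hit_sum:
  assumes spike: "mu n \<le> 5" "min_spike n = z"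
    and x: "length x = 5" "deg x = n" "n < 2 ^ N" "0 < omega x s"
    and cs: "list_all (\<lambda>(r, m). 0 < r \<and> r < 2 ^ s \<and> length m = 5) cs"
    and x_in: "x \<in> set (hit_sum cs)"
    and below: "\<forall>y\<in>set (hit_sum cs). y \<noteq> x \<longrightarrow> length y = 5 \<and> deg y = n \<and>
                  (mono_less_upto N y x \<or> below_spike_upto N y z)"
  shows "strongly_inadmissible x"
proof -
  define h where "h = set (hit_sum cs)"
  define m where "m = {y \<in> h. omega_less y x}"
  define p where "p = {y \<in> h - m - {x}. \<not> (omega_eq y x \<and> sigma_less y x)}"
  define Y where "Y = h - m - p - {x}"
  have less: "length y = 5 \<and> deg y = deg x \<and> (mono_less y x \<or> y \<in> Pspike_mons n)"
    if "y \<in> h" "y \<noteq> x" for y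
    using below that x spike mono_less_upto_imp_mono_less in_Pspike_mons_if_below_spike_upto
    unfolding h_def by metis
  have "h \<in> Aplus_hit (smax x)"
    unfolding h_def using x(2,3) hit_sum_in_Aplus_hit_smax[OF x(1) _ x(4) cs] by blast
  moreover have "finite m" "m \<subseteq> Pminus_mons x"
    using less omega_less_irrefl unfolding m_def h_def Pminus_mons_def mons_def by auto
  moreover have "finite p" "p \<subseteq> Pspike_mons (deg x)"
    using less x(2) unfolding p_def m_def h_def mono_less_def by auto
  moreover have "insert x Y = padd (padd h m) p"
    using x_in omega_less_irrefl unfolding Y_def padd_def m_def h_def p_def by auto
  moreover have "finite Y" "Y \<subseteq> mons" "\<forall>y\<in>Y. omega_eq y x \<and> mono_less y x"
    using less unfolding Y_def p_def m_def h_def mons_def mono_less_def by auto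
  ultimately show ?thesis
    using x(1) unfolding strongly_inadmissible_def mons_def by blast
qed

lemma strictly_inadmissible_1_6_3_6_5: "strictly_inadmissible [1,6,3,6,5]"
  by (rule strictly_inadmissible_if_hit_sum[where N = 5 and s = 3 and cs = "[(1, [1,3,5,5,6]), (1, [1,3,5,6,5]), (1, [1,3,6,5,5]), (1, [1,5,3,5,6]), (1, [1,5,3,6,5]), (1, [1,6,3,5,5]), (2, [1,3,5,5,5]), (2, [1,5,3,5,5])]"]; code_simp)

lemma strictly_inadmissible_1_6_6_3_5: "strictly_inadmissible [1,6,6,3,5]"
  by (rule strictly_inadmissible_if_hit_sum[where N = 5 and s = 3 and cs = "[(1, [1,3,5,5,6]), (1, [1,3,5,6,5]), (1, [1,3,6,5,5]), (1, [1,5,5,3,6]), (1, [1,5,6,3,5]), (1, [1,6,5,3,5]), (2, [1,3,5,5,5]), (2, [1,5,5,3,5])]"]; code_simp)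

lemma strictly_inadmissible_3_5_5_2_6: "strictly_inadmissible [3,5,5,2,6]"
  by (rule strictly_inadmissible_if_hit_sum[where N = 5 and s = 3 and cs = "[(1, [3,5,5,1,6]), (1, [5,3,5,1,6]), (1, [5,5,3,1,6]), (2, [3,3,5,2,6]), (2, [3,3,6,1,6]), (2, [3,5,3,2,6]), (2, [3,6,3,1,6]), (2, [6,3,3,1,6])]"]; code_simp)

lemma strictly_inadmissible_3_5_5_6_2: "strictly_inadmissible [3,5,5,6,2]"
  by (rule strictly_inadmissible_if_hit_sum[where N = 5 and s = 3 and cs = "[(1, [3,5,3,5,4]), (1, [3,5,5,5,2]), (1, [5,3,3,5,4]), (1, [5,3,5,5,2]), (1, [5,5,3,5,2]), (2, [3,3,3,6,4]), (2, [3,3,5,6,2]), (2, [3,3,6,5,2]), (2, [3,5,3,6,2]), (2, [3,6,3,5,2]), (2, [6,3,3,5,2])]"]; code_simp)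

lemma strictly_inadmissible_3_5_6_5_2: "strictly_inadmissible [3,5,6,5,2]"
  by (rule strictly_inadmissible_if_hit_sum[where N = 5 and s = 3 and cs = "[(1, [3,5,5,3,4]), (1, [3,5,5,5,2]), (1, [5,3,5,3,4]), (1, [5,3,5,5,2]), (1, [5,5,5,3,2]), (2, [3,3,5,6,2]), (2, [3,3,6,3,4]), (2, [3,3,6,5,2]), (2, [3,5,6,3,2]), (2, [3,6,5,3,2]), (2, [6,3,5,3,2])]"]; code_simp)

lemma strictly_inadmissible_3_4_5_3_6: "strictly_inadmissible [3,4,5,3,6]"
  by (rule strictly_inadmissible_if_hit_sum[where N = 5 and s = 3 and cs = "[(1, [5,1,3,5,6]), (1, [5,1,5,3,6]), (2, [3,1,3,6,6]), (2, [3,1,6,3,6]), (2, [3,2,3,5,6]), (2, [3,2,5,3,6]), (2, [6,1,3,3,6])]"]; code_simp)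

lemma strictly_inadmissible_3_4_5_6_3: "strictly_inadmissible [3,4,5,6,3]"
  by (rule strictly_inadmissible_if_hit_sum[where N = 5 and s = 3 and cs = "[(1, [5,1,3,6,5]), (1, [5,1,5,6,3]), (2, [3,1,3,6,6]), (2, [3,1,6,6,3]), (2, [3,2,3,6,5]), (2, [3,2,5,6,3]), (2, [6,1,3,6,3])]"]; code_simp)

lemma strictly_inadmissible_3_5_4_3_6: "strictly_inadmissible [3,5,4,3,6]"
  by (rule strictly_inadmissible_if_hit_sum[where N = 5 and s = 3 and cs = "[(1, [3,5,1,5,6]), (1, [5,3,1,5,6]), (1, [5,5,1,3,6]), (2, [3,3,1,6,6]), (2, [3,3,2,5,6]), (2, [3,5,2,3,6]), (2, [3,6,1,3,6]), (2, [6,3,1,3,6])]"]; code_simp)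

lemma strictly_inadmissible_3_5_4_6_3: "strictly_inadmissible [3,5,4,6,3]"
  by (rule strictly_inadmissible_if_hit_sum[where N = 5 and s = 3 and cs = "[(1, [3,5,1,6,5]), (1, [5,3,1,6,5]), (1, [5,5,1,6,3]), (2, [3,3,1,6,6]), (2, [3,3,2,6,5]), (2, [3,5,2,6,3]), (2, [3,6,1,6,3]), (2, [6,3,1,6,3])]"]; code_simp)

lemma strictly_inadmissible_3_5_6_4_3: "strictly_inadmissible [3,5,6,4,3]"
  by (rule strictly_inadmissible_if_hit_sum[where N = 5 and s = 3 and cs = "[(1, [3,5,5,2,5]), (1, [3,5,5,4,3]), (1, [5,3,5,2,5]), (1, [5,3,5,4,3]), (1, [5,5,5,2,3]), (2, [3,3,5,2,6]), (2, [3,3,6,2,5]), (2, [3,3,6,4,3]), (2, [3,5,6,2,3]), (2, [3,6,5,2,3]), (2, [6,3,5,2,3])]"]; code_simp)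

lemma strongly_inadmissible_1_3_6_6_5: "strongly_inadmissible [1,3,6,6,5]"
  by (rule strongly_inadmissible_if_hit_sum[OF _ min_spike_21, where N = 5 and s = 3 and
        cs = "[(1, [1,3,5,5,6]), (1, [1,3,5,6,5]), (1, [1,3,6,5,5]), (2, [1,3,5,5,5])]"], simp add: mu_21) code_simp+

lemma strongly_inadmissible_3_1_6_6_5: "strongly_inadmissible [3,1,6,6,5]"
  by (rule strongly_inadmissible_if_hit_sum[OF _ min_spike_21, where N = 5 and s = 3 and
        cs = "[(1, [3,1,5,5,6]), (1, [3,1,5,6,5]), (1, [3,1,6,5,5]), (2, [3,1,5,5,5])]"], simp add: mu_21) code_simp+

lemma strongly_inadmissible_3_5_6_6_1: "strongly_inadmissible [3,5,6,6,1]"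
  by (rule strongly_inadmissible_if_hit_sum[OF _ min_spike_21, where N = 5 and s = 3 and
        cs = "[(1, [3,5,5,5,2]), (1, [3,5,5,6,1]), (1, [3,5,6,5,1]), (2, [3,5,5,5,1])]"], simp add: mu_21) code_simp+

lemma strongly_inadmissible_3_5_2_6_5: "strongly_inadmissible [3,5,2,6,5]"
  by (rule strongly_inadmissible_if_hit_sum[OF _ min_spike_21, where N = 5 and s = 3 and
        cs = "[(1, [3,5,1,5,6]), (1, [3,5,1,6,5]), (1, [3,5,2,5,5]), (2, [3,5,1,5,5])]"], simp add: mu_21) code_simp+

lemma strongly_inadmissible_3_5_6_2_5: "strongly_inadmissible [3,5,6,2,5]"
  by (rule strongly_inadmissible_if_hit_sum[OF _ min_spike_21, where N = 5 and s = 3 and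
        cs = "[(1, [3,5,5,1,6]), (1, [3,5,5,2,5]), (1, [3,5,6,1,5]), (2, [3,5,5,1,5])]"], simp add: mu_21) code_simp+

theorem lemma4:
  shows "(\<forall>x\<in>set [[1,6,3,6,5], [1,6,6,3,5], [3,5,5,2,6], [3,5,5,6,2], [3,5,6,5,2],
                   [3,4,5,3,6], [3,4,5,6,3], [3,5,4,3,6], [3,5,4,6,3], [3,5,6,4,3]].
            strictly_inadmissible x) \<and>
         (\<forall>x\<in>set [[1,3,6,6,5], [3,1,6,6,5], [3,5,6,6,1], [3,5,2,6,5], [3,5,6,2,5]].
            strongly_inadmissible x)"
  using strictly_inadmissible_1_6_3_6_5 strictly_inadmissible_1_6_6_3_5
    strictly_inadmissible_3_5_5_2_6 strictly_inadmissible_3_5_5_6_2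
    strictly_inadmissible_3_5_6_5_2 strictly_inadmissible_3_4_5_3_6
    strictly_inadmissible_3_4_5_6_3 strictly_inadmissible_3_5_4_3_6
    strictly_inadmissible_3_5_4_6_3 strictly_inadmissible_3_5_6_4_3
    strongly_inadmissible_1_3_6_6_5 strongly_inadmissible_3_1_6_6_5
    strongly_inadmissible_3_5_6_6_1 strongly_inadmissible_3_5_2_6_5
    strongly_inadmissible_3_5_6_2_5
  by simp

end
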